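(* Let $M=\mathbb{R}^{1,1}$ be the two-dimensional Minkowski plane with canonical coordinates $(x^0,x^1)$, light-cone coordinates $u=x^0+x^1$, $v=x^0-x^1$, and causal order $x\le_M y$ iff $u(x)\le u(y)$ and $v(x)\le v(y)$. Let $\tilde{\mathcal{A}}_M$ be the linear span of smooth bounded real functions on $M$ with bounded derivatives which are causal (non-decreasing for $\le_M$), and $\tilde{\mathcal{A}}=\tilde{\mathcal{A}}_M\otimes M_2(\mathbb{C})$. Fix real numbers $d_1,d_2$ and $D_F=\mathrm{diag}(d_1,d_2)$. Let $\mathcal{C}$ be the set of self-adjoint $\alpha\in\tilde{\mathcal{A}}$ (smooth functions $M\to M_2(\mathbb{C})$ with Hermitian values) such that at every point of $M$ the $4\times 4$ Hermitian matrix $$\begin{pmatrix}2\partial_u\alpha & [D_F,\alpha]\\ -[D_F,\alpha] & 2\partial_v\alpha\end{pmatrix}$$ is positive semidefinite. Then for all $x,y\in M$: $$x\le_M y\iff \alpha(x)\le\alpha(y)\text{ (as Hermitian matrices) for all }\alpha\in\mathcal{C}.$$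
   Context: The displayed positivity condition is the pointwise form of the condition $j[D,\alpha]\le 0$ for the product Lorentzian spectral triple with $D=D_M\otimes 1+\gamma^0\gamma^1\otimes D_F$, $D_M=-i\gamma^\mu\partial_\mu$, $j=i\gamma^0\otimes 1$, $\gamma_0=\begin{pmatrix}0&i\\ i&0\end{pmatrix}$, $\gamma_1=\begin{pmatrix}0&-i\\ i&0\end{pmatrix}$; $\mathcal{C}$ is the resulting causal cone. For Hermitian matrices, $A\le B$ means $B-A$ is positive semidefinite. *)

theory Defs
  imports "HOL-Analysis.Analysis"
begin

type_synonym point = "real \<times> real"

definition lc_u :: "point \<Rightarrow> real" where "lc_u p = fst p + snd p"
definition lc_v :: "point \<Rightarrow> real" where "lc_v p = fst p - snd p"

definition causal_le :: "point \<Rightarrow> point \<Rightarrow> bool" where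
  "causal_le x y \<longleftrightarrow> lc_u x \<le> lc_u y \<and> lc_v x \<le> lc_v y"

definition dir_deriv :: "(point \<Rightarrow> 'b::real_normed_vector) \<Rightarrow> point \<Rightarrow> point \<Rightarrow> 'b" where
  "dir_deriv g e p = vector_derivative (\<lambda>t. g (p + t *\<^sub>R e)) (at 0)"

text \<open>Light-cone derivatives: x0 = (u+v)/2, x1 = (u-v)/2.\<close>
definition d_u :: "(point \<Rightarrow> 'b::real_normed_vector) \<Rightarrow> point \<Rightarrow> 'b" where
  "d_u g = dir_deriv g (1/2, 1/2)"
definition d_v :: "(point \<Rightarrow> 'b::real_normed_vector) \<Rightarrow> point \<Rightarrow> 'b" where
  "d_v g = dir_deriv g (1/2, -1/2)"

fun iter_partial :: "bool list \<Rightarrow> (point \<Rightarrow> real) \<Rightarrow> point \<Rightarrow> real" where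
  "iter_partial [] f = f"
| "iter_partial (b # w) f = dir_deriv (iter_partial w f) (if b then (1, 0) else (0, 1))"

definition smooth_bdd :: "(point \<Rightarrow> real) \<Rightarrow> bool" where
  "smooth_bdd f \<longleftrightarrow> (\<forall>w. (\<forall>p. iter_partial w f differentiable (at p))
                         \<and> bounded (range (iter_partial w f)))"

definition causal_fun :: "(point \<Rightarrow> real) \<Rightarrow> bool" where
  "causal_fun f \<longleftrightarrow> (\<forall>x y. causal_le x y \<longrightarrow> f x \<le> f y)"

definition AM_gen :: "(point \<Rightarrow> real) \<Rightarrow> bool" where
  "AM_gen f \<longleftrightarrow> smooth_bdd f \<and> causal_fun f"

type_synonym cmat2 = "complex^2^2"

text \<open>The algebra (span of A_M generators) tensor M_2(C): finite sums of f_j (x) A_j.\<close>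
definition tildeA :: "(point \<Rightarrow> cmat2) set" where
  "tildeA = {\<alpha>. \<exists>(n::nat) (fs :: nat \<Rightarrow> point \<Rightarrow> real) (As :: nat \<Rightarrow> cmat2). (\<forall>j<n. AM_gen (fs j)) \<and>
                 \<alpha> = (\<lambda>x. \<Sum>j<n. fs j x *\<^sub>R As j)}"

definition hermitian :: "complex^'n^'n \<Rightarrow> bool" where
  "hermitian A \<longleftrightarrow> (\<forall>i j. A $ i $ j = cnj (A $ j $ i))"

definition psd :: "complex^'n^'n \<Rightarrow> bool" where
  "psd A \<longleftrightarrow> hermitian A \<and>
     (\<forall>z :: complex^'n. 0 \<le> Re (\<Sum>i\<in>UNIV. \<Sum>j\<in>UNIV. cnj (z $ i) * A $ i $ j * z $ j))"

definition herm_le :: "complex^'n^'n \<Rightarrow> complex^'n^'n \<Rightarrow> bool" where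
  "herm_le A B \<longleftrightarrow> psd (B - A)"

definition DF :: "real \<Rightarrow> real \<Rightarrow> cmat2" where
  "DF d1 d2 = (\<chi> i j. if i = j then (if i = 1 then complex_of_real d1 else complex_of_real d2) else 0)"

definition commutator :: "cmat2 \<Rightarrow> cmat2 \<Rightarrow> cmat2" where
  "commutator A B = A ** B - B ** A"

definition block4 :: "cmat2 \<Rightarrow> cmat2 \<Rightarrow> cmat2 \<Rightarrow> cmat2 \<Rightarrow> complex^(2+2)^(2+2)" where
  "block4 P Q R S = (\<chi> a b. case a of
       Inl i \<Rightarrow> (case b of Inl j \<Rightarrow> P $ i $ j | Inr j \<Rightarrow> Q $ i $ j)
     | Inr i \<Rightarrow> (case b of Inl j \<Rightarrow> R $ i $ j | Inr j \<Rightarrow> S $ i $ j))"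

definition causal_cone :: "real \<Rightarrow> real \<Rightarrow> (point \<Rightarrow> cmat2) set" where
  "causal_cone d1 d2 = {\<alpha> \<in> tildeA. (\<forall>x. hermitian (\<alpha> x)) \<and>
     (\<forall>x. psd (block4 (2 *\<^sub>R d_u \<alpha> x) (commutator (DF d1 d2) (\<alpha> x))
                      (- commutator (DF d1 d2) (\<alpha> x)) (2 *\<^sub>R d_v \<alpha> x)))}"

end

theory Submission
  imports Defs "HOL-Computational_Algebra.Polynomial"
begin

text \<open>
  If x precedes y causally, join them by a null segment in the u-direction followed by one in the
  v-direction. The diagonal blocks of the positive semidefinite 4x4 matrix give
  \<open>\<partial>\<^sub>u\<alpha> \<ge> 0\<close> and \<open>\<partial>\<^sub>v\<alpha> \<ge> 0\<close>, so every quadratic form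
  \<open>z\<^sup>*\<alpha> z\<close> is nondecreasing along both segments.

  Conversely, for a smooth bounded causal function f the scalar matrix function \<open>f \<cdot> 1\<close>
  commutes with \<open>D\<^sub>F\<close> and has nonnegative light-cone derivatives, so it lies in the cone;
  testing with \<open>tanh u\<close> and \<open>tanh v\<close> recovers the two inequalities defining the causal order.
  These test functions are admissible because \<open>tanh' = 1 - tanh\<^sup>2\<close>: every derivative of
  \<open>tanh \<circ> l\<close> with l linear is a polynomial in \<open>tanh \<circ> l\<close>, hence bounded.
\<close>

definition quad_form :: "complex^'n \<Rightarrow> complex^'n^'n \<Rightarrow> real" where
  "quad_form z M = Re (\<Sum>i\<in>UNIV. \<Sum>j\<in>UNIV. cnj (z $ i) * M $ i $ j * z $ j)"

lemma psd_iff_quad_form: "psd M \<longleftrightarrow> hermitian M \<and> (\<forall>z. 0 \<le> quad_form z M)"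
  by (simp add: psd_def quad_form_def)

lemma linear_quad_form:
  fixes z :: "complex^'n"
  shows "linear (quad_form z)"
proof (rule linearI)
  fix A B :: "complex^'n^'n"
  show "quad_form z (A + B) = quad_form z A + quad_form z B"
    by (simp add: quad_form_def algebra_simps sum.distrib)
next
  fix r :: real and A :: "complex^'n^'n"
  have "cnj (z $ i) * (r *\<^sub>R A) $ i $ j * z $ j = of_real r * (cnj (z $ i) * A $ i $ j * z $ j)" for i j
    by (simp only: vector_scaleR_component) (simp add: scaleR_conv_of_real)
  then show "quad_form z (r *\<^sub>R A) = r *\<^sub>R quad_form z A"
    by (simp add: quad_form_def sum_distrib_left[symmetric])
qed

lemma quad_form_scaleR: "quad_form z (c *\<^sub>R M) = c * quad_form z M"
  using linear_scale[OF linear_quad_form] by simp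

lemma quad_form_diff: "quad_form z (B - A) = quad_form z B - quad_form z A"
  by (rule linear_diff[OF linear_quad_form])

lemma quad_form_mat_1: "quad_form z (mat 1) = (\<Sum>i\<in>UNIV. (cmod (z $ i))\<^sup>2)"
proof -
  have "quad_form z (mat 1) = Re (\<Sum>i\<in>UNIV. cnj (z $ i) * z $ i)"
    by (simp add: quad_form_def mat_def if_distrib if_distribR cong: if_cong)
  also have "\<dots> = (\<Sum>i\<in>UNIV. (cmod (z $ i))\<^sup>2)"
    by (simp add: Re_sum complex_mult_cnj mult.commute[of "cnj _"] cmod_power2)
  finally show ?thesis .
qed

lemma hermitian_scaleR_mat_1: "hermitian (c *\<^sub>R mat 1 :: complex^'n^'n)"
  by (simp add: hermitian_def mat_def)

lemma psd_scaleR_mat_1_iff: "psd (c *\<^sub>R mat 1 :: complex^'n^'n) \<longleftrightarrow> 0 \<le> c"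
proof -
  have "quad_form (\<chi> i. 1) (c *\<^sub>R mat 1 :: complex^'n^'n) = c * CARD('n)"
    by (simp add: quad_form_scaleR quad_form_mat_1)
  then have "psd (c *\<^sub>R mat 1 :: complex^'n^'n) \<Longrightarrow> 0 \<le> c"
    by (metis psd_iff_quad_form zero_le_mult_iff of_nat_0_less_iff zero_less_card_finite not_le)
  moreover have "0 \<le> c \<Longrightarrow> psd (c *\<^sub>R mat 1 :: complex^'n^'n)"
    by (simp add: psd_iff_quad_form hermitian_scaleR_mat_1 quad_form_scaleR quad_form_mat_1 sum_nonneg)
  ultimately show ?thesis by blast
qed

lemma hermitian_diff: "hermitian A \<Longrightarrow> hermitian B \<Longrightarrow> hermitian (B - A)"
  unfolding hermitian_def by (metis complex_cnj_diff vector_minus_component)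

lemma commutator_scaleR_mat_1: "commutator A (c *\<^sub>R mat 1) = 0"
proof -
  have "A ** (c *\<^sub>R mat 1) = c *\<^sub>R A"
    by (simp add: matrix_scalar_ac)
  moreover have "(c *\<^sub>R mat 1) ** A = c *\<^sub>R A"
    by (metis scalar_matrix_assoc matrix_mul_lid)
  ultimately show ?thesis
    by (simp add: commutator_def)
qed

lemma sum_UNIV_Plus:
  "(\<Sum>a\<in>(UNIV::('a::finite + 'b::finite) set). F a) = (\<Sum>i\<in>UNIV. F (Inl i)) + (\<Sum>i\<in>UNIV. F (Inr i))"
proof -
  have "sum F (UNIV::('a + 'b) set) = sum F (UNIV <+> UNIV)"
    by simp
  also have "\<dots> = (\<Sum>i\<in>UNIV. F (Inl i)) + (\<Sum>i\<in>UNIV. F (Inr i))"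
    by (subst sum.Plus) (auto simp: o_def)
  finally show ?thesis .
qed

lemma quad_form_block4_Inl:
  "quad_form (\<chi> a. case a of Inl i \<Rightarrow> z $ i | Inr i \<Rightarrow> 0) (block4 P Q R S) = quad_form z P"
  unfolding quad_form_def block4_def by (simp add: sum_UNIV_Plus)

lemma quad_form_block4_Inr:
  "quad_form (\<chi> a. case a of Inl i \<Rightarrow> 0 | Inr i \<Rightarrow> z $ i) (block4 P Q R S) = quad_form z S"
  unfolding quad_form_def block4_def by (simp add: sum_UNIV_Plus)

lemma psd_block4_imp_quad_form_nonneg:
  assumes "psd (block4 P Q R S)"
  shows "0 \<le> quad_form z P" and "0 \<le> quad_form z S"
  using assms quad_form_block4_Inl[of z P Q R S] quad_form_block4_Inr[of z P Q R S]
  by (metis psd_iff_quad_form)+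

lemma quad_form_block4_diag:
  "quad_form z (block4 P 0 0 S) = quad_form (\<chi> i. z $ Inl i) P + quad_form (\<chi> i. z $ Inr i) S"
  unfolding quad_form_def block4_def by (simp add: sum_UNIV_Plus)

lemma hermitian_block4_diag:
  assumes "hermitian P" "hermitian S"
  shows "hermitian (block4 P 0 0 S)"
  unfolding hermitian_def
proof (intro allI)
  fix a b :: "2 + 2"
  show "block4 P 0 0 S $ a $ b = cnj (block4 P 0 0 S $ b $ a)"
    by (cases a; cases b) (simp_all add: block4_def, (metis hermitian_def assms)+)
qed

lemma psd_block4_diag:
  assumes "psd P" "psd S"
  shows "psd (block4 P 0 0 S)"
proof -
  have "0 \<le> quad_form z (block4 P 0 0 S)" for z
    using assms unfolding quad_form_block4_diag psd_iff_quad_form by (simp add: add_nonneg_nonneg)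
  then show ?thesis
    using assms hermitian_block4_diag unfolding psd_iff_quad_form by blast
qed

lemma has_vector_derivative_dir_deriv:
  fixes g :: "point \<Rightarrow> 'b::real_normed_vector"
  assumes "g differentiable (at (q + t0 *\<^sub>R e))"
  shows "((\<lambda>t. g (q + t *\<^sub>R e)) has_vector_derivative dir_deriv g e (q + t0 *\<^sub>R e)) (at t0)"
proof -
  obtain g' where g': "(g has_derivative g') (at (q + t0 *\<^sub>R e))"
    using assms by (auto simp: differentiable_def)
  have g'_scale: "g' (s *\<^sub>R e) = s *\<^sub>R g' e" for s
    using g' has_derivative_bounded_linear linear_scale linear_simps(5) by blast
  have path: "((\<lambda>t. p + t *\<^sub>R e) has_derivative (\<lambda>s. s *\<^sub>R e)) (at t)" for p and t :: real
    by (auto intro!: derivative_eq_intros)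
  have line: "((\<lambda>t. g (p + t *\<^sub>R e)) has_vector_derivative g' e) (at t1)"
    if "p + t1 *\<^sub>R e = q + t0 *\<^sub>R e" for p t1
  proof -
    have "((\<lambda>t. g (p + t *\<^sub>R e)) has_derivative (\<lambda>s. g' (s *\<^sub>R e))) (at t1)"
      using has_derivative_compose[OF path[of p t1]] g' that by (simp add: o_def)
    then show ?thesis by (simp add: has_vector_derivative_def g'_scale)
  qed
  have "dir_deriv g e (q + t0 *\<^sub>R e) = g' e"
    unfolding dir_deriv_def by (rule vector_derivative_at, rule line) simp
  then show ?thesis using line[of q t0] by simp
qed

lemma mono_along_line_if_dir_deriv_nonneg:
  fixes g :: "point \<Rightarrow> 'b::real_normed_vector" and \<phi> :: "'b \<Rightarrow> real"
  assumes "bounded_linear \<phi>" "\<And>p. g differentiable (at p)" "\<And>p. 0 \<le> \<phi> (dir_deriv g e p)"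
    and "0 \<le> T"
  shows "\<phi> (g q) \<le> \<phi> (g (q + T *\<^sub>R e))"
proof -
  have "\<phi> (g (q + 0 *\<^sub>R e)) \<le> \<phi> (g (q + T *\<^sub>R e))"
  proof (rule DERIV_nonneg_imp_nondecreasing[where f = "\<lambda>t. \<phi> (g (q + t *\<^sub>R e))", OF \<open>0 \<le> T\<close>])
    fix t
    have "((\<lambda>t. \<phi> (g (q + t *\<^sub>R e))) has_vector_derivative \<phi> (dir_deriv g e (q + t *\<^sub>R e))) (at t)"
      by (rule bounded_linear.has_vector_derivative[OF assms(1) has_vector_derivative_dir_deriv])
        (rule assms(2))
    then show "\<exists>y. ((\<lambda>t. \<phi> (g (q + t *\<^sub>R e))) has_real_derivative y) (at t) \<and> 0 \<le> y"
      using assms(3) has_real_derivative_iff_has_vector_derivative by blast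
  qed
  then show ?thesis by simp
qed

lemma dir_deriv_nonneg_if_mono:
  fixes f :: "point \<Rightarrow> real"
  assumes "f differentiable (at p)" and "mono (\<lambda>t. f (p + t *\<^sub>R e))"
  shows "0 \<le> dir_deriv f e p"
proof -
  have "((\<lambda>t. f (p + t *\<^sub>R e)) has_real_derivative dir_deriv f e p) (at 0)"
    using has_vector_derivative_dir_deriv[of f p 0 e] assms(1)
    by (simp add: has_real_derivative_iff_has_vector_derivative)
  then show ?thesis
    using mono_on_imp_deriv_nonneg[of UNIV] assms(2) by auto
qed

lemma dir_deriv_scaleR_const:
  fixes f :: "point \<Rightarrow> real"
  assumes "f differentiable (at p)"
  shows "dir_deriv (\<lambda>p. f p *\<^sub>R C) e p = dir_deriv f e p *\<^sub>R C"
proof -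
  have "((\<lambda>t. f (p + t *\<^sub>R e)) has_vector_derivative dir_deriv f e p) (at 0)"
    using has_vector_derivative_dir_deriv[of f p 0 e] assms by simp
  then have "((\<lambda>t. f (p + t *\<^sub>R e) *\<^sub>R C) has_vector_derivative dir_deriv f e p *\<^sub>R C) (at 0)"
    using bounded_linear.has_vector_derivative[OF bounded_linear_scaleR_left] by fastforce
  then show ?thesis unfolding dir_deriv_def by (rule vector_derivative_at)
qed

lemma linear_lc_u: "linear lc_u"
  by (rule linearI) (auto simp: lc_u_def algebra_simps)

lemma linear_lc_v: "linear lc_v"
  by (rule linearI) (auto simp: lc_v_def algebra_simps)

lemma causal_le_add_future:
  assumes "0 \<le> lc_u e" "0 \<le> lc_v e" "0 \<le> t"
  shows "causal_le p (p + t *\<^sub>R e)"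
  using assms
  by (simp add: causal_le_def linear_add[OF linear_lc_u] linear_add[OF linear_lc_v]
      linear_scale[OF linear_lc_u] linear_scale[OF linear_lc_v])

lemma causal_fun_mono_along_future:
  assumes "causal_fun f" "0 \<le> lc_u e" "0 \<le> lc_v e"
  shows "mono (\<lambda>t. f (p + t *\<^sub>R e))"
proof (rule monoI)
  fix s t :: real
  assume "s \<le> t"
  then have "causal_le (p + s *\<^sub>R e) ((p + s *\<^sub>R e) + (t - s) *\<^sub>R e)"
    using assms(2,3) by (intro causal_le_add_future) auto
  then have "causal_le (p + s *\<^sub>R e) (p + t *\<^sub>R e)"
    by (simp add: algebra_simps)
  then show "f (p + s *\<^sub>R e) \<le> f (p + t *\<^sub>R e)"
    using assms(1) unfolding causal_fun_def by blast
qed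

lemma tildeA_differentiable: "\<alpha> \<in> tildeA \<Longrightarrow> \<alpha> differentiable (at p)"
  unfolding tildeA_def AM_gen_def smooth_bdd_def
  by (fastforce intro!: differentiable_sum differentiable_scaleR dest: spec[of _ "[]"])

lemma scaleR_mat_1_in_causal_cone:
  assumes "AM_gen f"
  shows "(\<lambda>p. f p *\<^sub>R mat 1) \<in> causal_cone d1 d2"
proof -
  have diff: "f differentiable (at p)" for p
    using assms by (metis AM_gen_def smooth_bdd_def iter_partial.simps(1))
  have causal: "causal_fun f"
    using assms by (simp add: AM_gen_def)
  have "(\<lambda>p. f p *\<^sub>R mat 1) \<in> tildeA"
    unfolding tildeA_def using assms
    by (auto intro!: exI[of _ 1] exI[of _ "\<lambda>_. f"] exI[of _ "\<lambda>_. mat 1"])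
  moreover have "psd (block4 (2 *\<^sub>R d_u (\<lambda>p. f p *\<^sub>R mat 1) x) (commutator (DF d1 d2) (f x *\<^sub>R mat 1))
      (- commutator (DF d1 d2) (f x *\<^sub>R mat 1)) (2 *\<^sub>R d_v (\<lambda>p. f p *\<^sub>R mat 1) x))" for x
  proof -
    have "0 \<le> d_u f x" "0 \<le> d_v f x"
      unfolding d_u_def d_v_def
      by (intro dir_deriv_nonneg_if_mono diff causal_fun_mono_along_future causal;
          simp add: lc_u_def lc_v_def)+
    then show ?thesis
      unfolding d_u_def d_v_def dir_deriv_scaleR_const[OF diff] commutator_scaleR_mat_1
        scaleR_scaleR minus_zero
      by (intro psd_block4_diag) (simp_all add: psd_scaleR_mat_1_iff)
  qed
  ultimately show ?thesis
    by (simp add: causal_cone_def hermitian_scaleR_mat_1)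
qed

lemma herm_le_scaleR_mat_1_iff: "herm_le (a *\<^sub>R mat 1) (b *\<^sub>R mat 1 :: complex^'n^'n) \<longleftrightarrow> a \<le> b"
  by (simp add: herm_le_def scaleR_left_diff_distrib[symmetric] psd_scaleR_mat_1_iff)

lemma has_real_derivative_poly_tanh:
  "((\<lambda>s. poly Q (tanh s)) has_real_derivative poly (pderiv Q * [:1, 0, -1:]) (tanh s)) (at s)"
proof -
  have "((\<lambda>s. poly Q (tanh s)) has_real_derivative poly (pderiv Q) (tanh s) * ((1 - (tanh s)\<^sup>2) * 1)) (at s)"
    by (rule DERIV_chain2[OF poly_DERIV])
      (auto intro!: derivative_eq_intros simp: cosh_real_pos[THEN less_imp_neq, symmetric])
  then show ?thesis by (simp add: power2_eq_square algebra_simps)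
qed

context
  fixes l :: "point \<Rightarrow> real"
  assumes l: "linear l"
begin

lemma dir_deriv_poly_tanh:
  "dir_deriv (\<lambda>p. poly Q (tanh (l p))) e p = poly (smult (l e) (pderiv Q * [:1, 0, -1:])) (tanh (l p))"
proof -
  have "((\<lambda>t. poly Q (tanh (l p + t * l e))) has_real_derivative
          poly (pderiv Q * [:1, 0, -1:]) (tanh (l p + 0 * l e)) * (0 + 1 * l e)) (at 0)"
    by (rule DERIV_chain2[OF has_real_derivative_poly_tanh]) (auto intro!: derivative_eq_intros)
  then have "((\<lambda>t. poly Q (tanh (l (p + t *\<^sub>R e)))) has_vector_derivative
          poly (smult (l e) (pderiv Q * [:1, 0, -1:])) (tanh (l p))) (at 0)"
    by (simp add: linear_add[OF l] linear_scale[OF l] has_real_derivative_iff_has_vector_derivative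
        mult.commute)
  then show ?thesis unfolding dir_deriv_def by (rule vector_derivative_at)
qed

lemma iter_partial_poly_tanh:
  "\<exists>Q'. iter_partial w (\<lambda>p. poly Q (tanh (l p))) = (\<lambda>p. poly Q' (tanh (l p)))"
proof (induction w)
  case Nil
  then show ?case by auto
next
  case (Cons b w)
  then obtain Q' where "iter_partial w (\<lambda>p. poly Q (tanh (l p))) = (\<lambda>p. poly Q' (tanh (l p)))"
    by blast
  then have "iter_partial (b # w) (\<lambda>p. poly Q (tanh (l p)))
      = dir_deriv (\<lambda>p. poly Q' (tanh (l p))) (if b then (1, 0) else (0, 1))"
    by simp
  also have "\<dots> = (\<lambda>p. poly (smult (l (if b then (1, 0) else (0, 1))) (pderiv Q' * [:1, 0, -1:])) (tanh (l p)))"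
    by (rule ext, rule dir_deriv_poly_tanh)
  finally show ?case
    by blast
qed

lemma differentiable_poly_tanh: "(\<lambda>p. poly Q (tanh (l p))) differentiable (at p)"
proof -
  have "l differentiable (at p)"
    using l by (simp add: linear_conv_bounded_linear bounded_linear_imp_differentiable)
  moreover have "(\<lambda>s. poly Q (tanh s)) differentiable (at (l p))"
    using has_real_derivative_poly_tanh real_differentiable_def by blast
  ultimately show ?thesis
    using differentiable_chain_at by (auto simp: o_def)
qed

lemma bounded_range_poly_tanh: "bounded (range (\<lambda>p. poly Q (tanh (l p))))"
proof -
  have "compact (poly Q ` {-1..1})"
    by (rule compact_continuous_image) (auto intro!: continuous_on_poly continuous_on_id)
  moreover have "range (\<lambda>p. poly Q (tanh (l p))) \<subseteq> poly Q ` {-1..1}"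
  proof (rule image_subsetI)
    fix p
    have "tanh (l p) \<in> {-1..1}"
      using tanh_real_lt_1[of "l p"] tanh_real_gt_neg1[of "l p"] by simp
    then show "poly Q (tanh (l p)) \<in> poly Q ` {-1..1}"
      by (rule imageI)
  qed
  ultimately show ?thesis
    using compact_imp_bounded bounded_subset by blast
qed

lemma smooth_bdd_tanh: "smooth_bdd (\<lambda>p. tanh (l p))"
proof -
  have "smooth_bdd (\<lambda>p. poly [:0, 1:] (tanh (l p)))"
    unfolding smooth_bdd_def
  proof (intro allI conjI)
    fix w
    obtain Q' where Q': "iter_partial w (\<lambda>p. poly [:0, 1:] (tanh (l p))) = (\<lambda>p. poly Q' (tanh (l p)))"
      using iter_partial_poly_tanh by blast
    show "bounded (range (iter_partial w (\<lambda>p. poly [:0, 1:] (tanh (l p)))))"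
      unfolding Q' by (rule bounded_range_poly_tanh)
    fix p
    show "iter_partial w (\<lambda>p. poly [:0, 1:] (tanh (l p))) differentiable (at p)"
      unfolding Q' by (rule differentiable_poly_tanh)
  qed
  then show ?thesis
    by simp
qed

end

lemma AM_gen_tanh_lc_u: "AM_gen (\<lambda>p. tanh (lc_u p))"
  by (simp add: AM_gen_def smooth_bdd_tanh[OF linear_lc_u] causal_fun_def causal_le_def)

lemma AM_gen_tanh_lc_v: "AM_gen (\<lambda>p. tanh (lc_v p))"
  by (simp add: AM_gen_def smooth_bdd_tanh[OF linear_lc_v] causal_fun_def causal_le_def)

lemma causal_coneD:
  assumes "\<alpha> \<in> causal_cone d1 d2"
  shows "\<alpha> \<in> tildeA" and "hermitian (\<alpha> x)"
    and "psd (block4 (2 *\<^sub>R d_u \<alpha> x) (commutator (DF d1 d2) (\<alpha> x))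
                    (- commutator (DF d1 d2) (\<alpha> x)) (2 *\<^sub>R d_v \<alpha> x))"
  using assms unfolding causal_cone_def by blast+

lemma quad_form_mono_causal:
  assumes "\<alpha> \<in> causal_cone d1 d2" "causal_le x y"
  shows "quad_form z (\<alpha> x) \<le> quad_form z (\<alpha> y)"
proof -
  have diff: "\<alpha> differentiable (at p)" for p
    using tildeA_differentiable[OF causal_coneD(1)[OF assms(1)]] .
  have bl: "bounded_linear (quad_form z)"
    using linear_quad_form linear_conv_bounded_linear by blast
  have "0 \<le> quad_form z (2 *\<^sub>R d_u \<alpha> p)" "0 \<le> quad_form z (2 *\<^sub>R d_v \<alpha> p)" for p
    using psd_block4_imp_quad_form_nonneg[OF causal_coneD(3)[OF assms(1)]] by blast+
  then have du: "0 \<le> quad_form z (dir_deriv \<alpha> (1/2, 1/2) p)"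
    and dv: "0 \<le> quad_form z (dir_deriv \<alpha> (1/2, -1/2) p)" for p
    by (simp_all add: quad_form_scaleR d_u_def d_v_def)
  \<comment> \<open>from x to m only u changes, from m to y only v\<close>
  define m where "m = x + (lc_u y - lc_u x) *\<^sub>R ((1/2, 1/2) :: point)"
  have y: "y = m + (lc_v y - lc_v x) *\<^sub>R ((1/2, -1/2) :: point)"
    unfolding m_def lc_u_def lc_v_def by (cases x, cases y) (simp add: field_simps)
  have u: "0 \<le> lc_u y - lc_u x" and v: "0 \<le> lc_v y - lc_v x"
    using assms(2) by (auto simp: causal_le_def)
  have "quad_form z (\<alpha> x) \<le> quad_form z (\<alpha> m)"
    unfolding m_def by (rule mono_along_line_if_dir_deriv_nonneg[OF bl diff du u])
  also have "\<dots> \<le> quad_form z (\<alpha> y)"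
    using mono_along_line_if_dir_deriv_nonneg[OF bl diff dv v, of m] by (simp only: y[symmetric])
  finally show ?thesis .
qed

lemma herm_le_if_causal_le:
  assumes "\<alpha> \<in> causal_cone d1 d2" "causal_le x y"
  shows "herm_le (\<alpha> x) (\<alpha> y)"
proof -
  have "hermitian (\<alpha> y - \<alpha> x)"
    by (intro hermitian_diff causal_coneD(2)[OF assms(1)])
  moreover have "0 \<le> quad_form z (\<alpha> y - \<alpha> x)" for z
    using quad_form_mono_causal[OF assms, of z] by (simp add: quad_form_diff)
  ultimately show ?thesis
    unfolding herm_le_def psd_iff_quad_form by blast
qed

lemma AM_gen_le_if_cone_le:
  assumes "\<forall>\<alpha>\<in>causal_cone d1 d2. herm_le (\<alpha> x) (\<alpha> y)" and "AM_gen f"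
  shows "f x \<le> f y"
proof -
  have "herm_le ((\<lambda>p. f p *\<^sub>R mat 1) x) ((\<lambda>p. f p *\<^sub>R mat 1) y :: cmat2)"
    using assms(1) scaleR_mat_1_in_causal_cone[OF assms(2)] by (rule bspec)
  then show ?thesis
    by (simp add: herm_le_scaleR_mat_1_iff)
qed

lemma causal_le_if_cone_le:
  assumes "\<forall>\<alpha>\<in>causal_cone d1 d2. herm_le (\<alpha> x) (\<alpha> y)"
  shows "causal_le x y"
  using AM_gen_le_if_cone_le[OF assms AM_gen_tanh_lc_u] AM_gen_le_if_cone_le[OF assms AM_gen_tanh_lc_v]
  unfolding causal_le_def tanh_real_le_iff by (rule conjI)

theorem mainTheorem2:
  fixes d1 d2 :: real and x y :: point
  shows "causal_le x y \<longleftrightarrow> (\<forall>\<alpha>\<in>causal_cone d1 d2. herm_le (\<alpha> x) (\<alpha> y))"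
  by (blast intro: herm_le_if_causal_le causal_le_if_cone_le)

end
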